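(* Let $P$ be a finite $(3+1)$-free poset and let $\mathsf a=a_na_{n-1}\cdots a_1$, $\mathsf b=b_nb_{n-1}\cdots b_1$ and $\mathsf v$ be words in the alphabet $P$ such that (i) the words $\mathsf a\mathsf v$ and $\mathsf b\mathsf v$ are $P$-strictly decreasing; (ii) $b_i\not<_Pa_i$ for all $i\in[n]$; (iii) $a_i<_Pb_{i+1}$ for all $i\in[n-1]$. Then $\mathbf{u}_{\mathsf a}\mathbf{u}_{\mathsf v}\mathbf{u}_{\mathsf b}\equiv\mathbf{u}_{\mathsf a}\mathbf{u}_{\mathsf b}\mathbf{u}_{\mathsf v}\pmod{I^P_{\mathrm{plac}}}$.
   Context: $a<_Pb$: strict order; $a\sim_Pb$: incomparable or equal. A word $w_1\cdots w_m$ is $P$-strictly decreasing if $w_1>_Pw_2>_P\cdots>_Pw_m$. $\mathcal{U}_P=\mathbb{Z}\langle u_a:a\in P\rangle$, $\mathbf{u}_w=u_{w_1}\cdots u_{w_m}$. $I^P_{\mathrm{plac}}$ is the two-sided ideal generated by: $u_bu_au_c-u_bu_cu_a$ when $a<_Pb$, $c\not<_Pb$, $a<_Pc$; $u_cu_au_b-u_au_cu_b$ when $b\not<_Pa$, $b<_Pc$, $a<_Pc$; $u_cu_au_b-u_bu_cu_a$ when $a\sim_Pb$, $b\sim_Pc$, $a<_Pc$. *)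

theory Defs
  imports Main
begin

text \<open>The poset P is the (finite) type 'a with its partial order.
  Elements of the free associative ring Z<u_a : a in P> are represented as
  finitely supported functions from words (lists over 'a) to int.\<close>

definition incomp :: "'a::order \<Rightarrow> 'a \<Rightarrow> bool" where
  "incomp a b \<longleftrightarrow> \<not> a < b \<and> \<not> b < a"

definition three_one_free :: "'a::order itself \<Rightarrow> bool" where
  "three_one_free _ \<longleftrightarrow> \<not> (\<exists>x y z w :: 'a. x < y \<and> y < z \<and>
      \<not> w \<le> x \<and> \<not> x \<le> w \<and> \<not> w \<le> y \<and> \<not> y \<le> w \<and> \<not> w \<le> z \<and> \<not> z \<le> w)"

definition strictly_decr :: "'a::order list \<Rightarrow> bool" where
  "strictly_decr w \<longleftrightarrow> (\<forall>i. Suc i < length w \<longrightarrow> w ! i > w ! Suc i)"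

definition mon :: "'a list \<Rightarrow> ('a list \<Rightarrow> int)" where
  "mon w = (\<lambda>v. if v = w then 1 else 0)"

definition fadd :: "('a list \<Rightarrow> int) \<Rightarrow> ('a list \<Rightarrow> int) \<Rightarrow> ('a list \<Rightarrow> int)" where
  "fadd f g = (\<lambda>w. f w + g w)"

definition fsub :: "('a list \<Rightarrow> int) \<Rightarrow> ('a list \<Rightarrow> int) \<Rightarrow> ('a list \<Rightarrow> int)" where
  "fsub f g = (\<lambda>w. f w - g w)"

definition fin_supp :: "('a list \<Rightarrow> int) \<Rightarrow> bool" where
  "fin_supp f \<longleftrightarrow> finite {w. f w \<noteq> 0}"

definition nc_mult :: "('a list \<Rightarrow> int) \<Rightarrow> ('a list \<Rightarrow> int) \<Rightarrow> ('a list \<Rightarrow> int)" where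
  "nc_mult f g = (\<lambda>w. \<Sum>i\<le>length w. f (take i w) * g (drop i w))"

definition plac_gens :: "('a::order list \<Rightarrow> int) set" where
  "plac_gens =
     {fsub (mon [b, a, c]) (mon [b, c, a]) | a b c. a < b \<and> \<not> c < b \<and> a < c}
   \<union> {fsub (mon [c, a, b]) (mon [a, c, b]) | a b c. \<not> b < a \<and> b < c \<and> a < c}
   \<union> {fsub (mon [c, a, b]) (mon [b, c, a]) | a b c. incomp a b \<and> incomp b c \<and> a < c}"

inductive_set two_sided_ideal :: "('a list \<Rightarrow> int) set \<Rightarrow> ('a list \<Rightarrow> int) set"
  for G where
  gen: "g \<in> G \<Longrightarrow> g \<in> two_sided_ideal G"
| zero: "(\<lambda>_. 0) \<in> two_sided_ideal G"
| add: "f \<in> two_sided_ideal G \<Longrightarrow> g \<in> two_sided_ideal G \<Longrightarrow> fadd f g \<in> two_sided_ideal G"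
| lmult: "fin_supp p \<Longrightarrow> f \<in> two_sided_ideal G \<Longrightarrow> nc_mult p f \<in> two_sided_ideal G"
| rmult: "fin_supp p \<Longrightarrow> f \<in> two_sided_ideal G \<Longrightarrow> nc_mult f p \<in> two_sided_ideal G"

definition I_plac :: "('a::order list \<Rightarrow> int) set" where
  "I_plac = two_sided_ideal plac_gens"

text \<open>The word a_n a_{n-1} ... a_1 for a :: nat => 'a.\<close>
definition word_down :: "nat \<Rightarrow> (nat \<Rightarrow> 'a) \<Rightarrow> 'a list" where
  "word_down n a = map (\<lambda>j. a (n - j)) [0..<n]"

end

theory Submission
  imports Defs
begin

text \<open>Only the first family of plactic relations is needed: if \<open>c\<close> is not below \<open>x\<close> but above
  every letter of a \<open>P\<close>-strictly decreasing word \<open>w\<close>, then \<open>x w c \<equiv> x c w\<close>, by moving \<open>c\<close> leftwards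
  one letter at a time with \<open>x' y c \<equiv> x' c y\<close>. Induction on \<open>n\<close>, peeling off \<open>a\<^sub>n\<close> and \<open>b\<^sub>n\<close>:
  \<open>a\<^sub>n a' v b\<^sub>n b' \<equiv> a\<^sub>n b\<^sub>n a' v b' \<equiv> a\<^sub>n b\<^sub>n a' b' v \<equiv> a\<^sub>n a' b\<^sub>n b' v\<close>, where the outer steps move
  \<open>b\<^sub>n\<close> past \<open>a' v\<close> resp. \<open>a'\<close> (possible because \<open>b\<^sub>n \<not>< a\<^sub>n\<close> and \<open>a\<^sub>n\<^sub>-\<^sub>1 < b\<^sub>n\<close>) and the middle step
  is the induction hypothesis.\<close>

lemma nc_mult_mon: "nc_mult (mon u) (mon w) = mon (u @ w)"
proof (rule ext)
  fix x
  have "nc_mult (mon u) (mon w) x = (\<Sum>i\<le>length x. if i = length u \<and> x = u @ w then 1 else 0)"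
    unfolding nc_mult_def
  proof (rule sum.cong[OF refl])
    fix i assume "i \<in> {..length x}"
    then have "(take i x = u \<and> drop i x = w) \<longleftrightarrow> (i = length u \<and> x = u @ w)"
      by (auto simp: min_def)
    moreover have "mon u (take i x) * mon w (drop i x) = (if take i x = u \<and> drop i x = w then 1 else 0)"
      by (simp add: mon_def)
    ultimately show "mon u (take i x) * mon w (drop i x) = (if i = length u \<and> x = u @ w then 1 else 0)"
      by simp
  qed
  also have "\<dots> = mon (u @ w) x"
    by (auto simp: mon_def)
  finally show "nc_mult (mon u) (mon w) x = mon (u @ w) x" .
qed

lemma nc_mult_fsub_right: "nc_mult p (fsub f g) = fsub (nc_mult p f) (nc_mult p g)"
  unfolding nc_mult_def fsub_def by (simp add: right_diff_distrib sum_subtractf)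

lemma nc_mult_fsub_left: "nc_mult (fsub f g) p = fsub (nc_mult f p) (nc_mult g p)"
  unfolding nc_mult_def fsub_def by (simp add: left_diff_distrib sum_subtractf)

lemma fin_supp_mon: "fin_supp (mon w)"
  unfolding fin_supp_def mon_def by simp

lemma two_sided_ideal_uminus:
  assumes "f \<in> two_sided_ideal G"
  shows "(\<lambda>x. - f x) \<in> two_sided_ideal G"
proof -
  define minus_one :: "'a list \<Rightarrow> int" where "minus_one = (\<lambda>x. - mon [] x)"
  have "fin_supp minus_one"
    using fin_supp_mon[of "[]"] by (simp add: fin_supp_def minus_one_def)
  moreover have "nc_mult minus_one f = (\<lambda>x. - f x)"
  proof
    fix x
    have "nc_mult minus_one f x = (\<Sum>i\<le>length x. if i = 0 then - f x else 0)"
      unfolding nc_mult_def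
    proof (rule sum.cong[OF refl])
      fix i assume "i \<in> {..length x}"
      then show "minus_one (take i x) * f (drop i x) = (if i = 0 then - f x else 0)"
        by (cases x) (simp_all add: minus_one_def mon_def)
    qed
    then show "nc_mult minus_one f x = - f x" by simp
  qed
  ultimately show ?thesis
    using assms two_sided_ideal.lmult by metis
qed

definition mon_cong :: "('a list \<Rightarrow> int) set \<Rightarrow> 'a list \<Rightarrow> 'a list \<Rightarrow> bool" where
  "mon_cong G u w \<longleftrightarrow> fsub (mon u) (mon w) \<in> two_sided_ideal G"

lemma mon_cong_refl: "mon_cong G u u"
proof -
  have "fsub (mon u) (mon u) = (\<lambda>_. 0)" by (simp add: fsub_def)
  then show ?thesis unfolding mon_cong_def by (simp add: two_sided_ideal.zero)
qed

lemma mon_cong_sym: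
  assumes "mon_cong G u w"
  shows "mon_cong G w u"
proof -
  have "(\<lambda>x. - fsub (mon u) (mon w) x) = fsub (mon w) (mon u)"
    by (simp add: fsub_def)
  then show ?thesis
    using assms two_sided_ideal_uminus unfolding mon_cong_def by metis
qed

lemma mon_cong_trans [trans]:
  assumes "mon_cong G u v" "mon_cong G v w"
  shows "mon_cong G u w"
proof -
  have "fadd (fsub (mon u) (mon v)) (fsub (mon v) (mon w)) = fsub (mon u) (mon w)"
    by (simp add: fadd_def fsub_def)
  then show ?thesis
    using assms two_sided_ideal.add unfolding mon_cong_def by metis
qed

lemma mon_cong_append:
  assumes "mon_cong G u w"
  shows "mon_cong G (p @ u @ s) (p @ w @ s)"
proof -
  have "nc_mult (nc_mult (mon p) (fsub (mon u) (mon w))) (mon s) \<in> two_sided_ideal G"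
    using assms unfolding mon_cong_def
    by (intro two_sided_ideal.rmult two_sided_ideal.lmult fin_supp_mon)
  then show ?thesis
    unfolding mon_cong_def by (simp add: nc_mult_fsub_left nc_mult_fsub_right nc_mult_mon)
qed

lemma mon_cong_plac_swap:
  fixes x y c :: "'a::order"
  assumes "y < x" "\<not> c < x" "y < c"
  shows "mon_cong plac_gens [x, y, c] [x, c, y]"
proof -
  have "fsub (mon [x, y, c]) (mon [x, c, y]) \<in> plac_gens"
    unfolding plac_gens_def using assms by blast
  then show ?thesis
    unfolding mon_cong_def by (rule two_sided_ideal.gen)
qed

lemma mon_cong_plac_move_left:
  fixes c :: "'a::order"
  assumes "sorted_wrt (>) (x # w)" "\<not> c < x" "\<forall>z\<in>set w. z < c"
  shows "mon_cong plac_gens (x # w @ [c]) (x # c # w)"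
  using assms
proof (induction w arbitrary: x)
  case Nil
  then show ?case by (simp add: mon_cong_refl)
next
  case (Cons y w)
  have "y < x" "y < c"
    using Cons.prems by simp_all
  have swap: "mon_cong plac_gens [x, y, c] [x, c, y]"
    using mon_cong_plac_swap \<open>y < x\<close> \<open>y < c\<close> Cons.prems(2) by blast
  have "mon_cong plac_gens (y # w @ [c]) (y # c # w)"
    using Cons.IH[of y] Cons.prems \<open>y < c\<close> by auto
  then have "mon_cong plac_gens (x # y # w @ [c]) (x # y # c # w)"
    using mon_cong_append[of plac_gens _ _ "[x]" "[]"] by simp
  also have "mon_cong plac_gens \<dots> (x # c # y # w)"
    using mon_cong_append[OF swap, of "[]" w] by simp
  finally show ?case
    by simp
qed

lemma word_down_Suc: "word_down (Suc n) a = a (Suc n) # word_down n a"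
  unfolding word_down_def
  by (simp add: upt_conv_Cons map_Suc_upt[symmetric] del: upt_Suc)

lemma strictly_decr_iff_sorted_wrt: "strictly_decr w \<longleftrightarrow> sorted_wrt (>) w"
  unfolding strictly_decr_def
  by (subst sorted_wrt_iff_nth_Suc_transp) (auto simp: transp_def)

lemma word_down_less:
  fixes a :: "nat \<Rightarrow> 'a::order"
  assumes "sorted_wrt (>) (word_down n a)" "0 < n" "a n < c"
  shows "\<forall>z\<in>set (word_down n a). z < c"
proof -
  obtain m where "n = Suc m"
    using \<open>0 < n\<close> gr0_conv_Suc by blast
  then show ?thesis
    using assms by (auto simp: word_down_Suc)
qed

lemma mon_cong_plac_word_down:
  fixes a b :: "nat \<Rightarrow> 'a::order"
  assumes "sorted_wrt (>) (word_down n a @ v)" "sorted_wrt (>) (word_down n b @ v)"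
    and "\<forall>i\<in>{1..n}. \<not> b i < a i" "\<forall>i\<in>{1..n-1}. a i < b (i + 1)"
  shows "mon_cong plac_gens (word_down n a @ v @ word_down n b) (word_down n a @ word_down n b @ v)"
  using assms
proof (induction n)
  case 0
  then show ?case by (simp add: word_down_def mon_cong_refl)
next
  case (Suc n)
  let ?A = "a (Suc n)" and ?B = "b (Suc n)" and ?a = "word_down n a" and ?b = "word_down n b"
  have sorted_a: "sorted_wrt (>) (?A # ?a @ v)" and sorted_b: "sorted_wrt (>) (?B # ?b @ v)"
    using Suc.prems(1,2) by (simp_all add: word_down_Suc)
  have "\<not> ?B < ?A"
    using Suc.prems(3) by simp
  have "\<forall>z\<in>set ?a. z < ?B"
  proof (cases "n = 0")
    case False
    then show ?thesis
      using word_down_less[of n a ?B] Suc.prems(4) sorted_a by (simp add: sorted_wrt_append)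
  qed (simp add: word_down_def)
  moreover have "\<forall>z\<in>set v. z < ?B"
    using sorted_b by simp
  ultimately have "\<forall>z\<in>set (?a @ v). z < ?B" "\<forall>z\<in>set ?a. z < ?B"
    by auto
  then have move_a_v: "mon_cong plac_gens (?A # (?a @ v) @ [?B]) (?A # ?B # ?a @ v)"
    and move_a: "mon_cong plac_gens (?A # ?a @ [?B]) (?A # ?B # ?a)"
    using mon_cong_plac_move_left[of ?A "?a @ v" ?B] mon_cong_plac_move_left[of ?A ?a ?B]
      sorted_a \<open>\<not> ?B < ?A\<close> by (simp_all add: sorted_wrt_append)
  have "\<forall>i\<in>{1..n}. \<not> b i < a i" "\<forall>i\<in>{1..n-1}. a i < b (i + 1)"
    using Suc.prems(3,4) by auto
  then have IH: "mon_cong plac_gens (?a @ v @ ?b) (?a @ ?b @ v)"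
    using Suc.IH sorted_a sorted_b by (simp add: sorted_wrt_append)
  have "mon_cong plac_gens (?A # ?a @ v @ ?B # ?b) (?A # ?B # ?a @ v @ ?b)"
    using mon_cong_append[OF move_a_v, of "[]" ?b] by simp
  also have "mon_cong plac_gens \<dots> (?A # ?B # ?a @ ?b @ v)"
    using mon_cong_append[OF IH, of "[?A, ?B]" "[]"] by simp
  also have "mon_cong plac_gens \<dots> (?A # ?a @ ?B # ?b @ v)"
    using mon_cong_sym[OF mon_cong_append[OF move_a, of "[]" "?b @ v"]] by simp
  finally show ?case
    by (simp add: word_down_Suc)
qed

theorem mainTheorem14:
  fixes a b :: "nat \<Rightarrow> 'a::{order,finite}" and v :: "'a list" and n :: nat
  assumes "three_one_free TYPE('a)"
    and "strictly_decr (word_down n a @ v)"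
    and "strictly_decr (word_down n b @ v)"
    and "\<forall>i\<in>{1..n}. \<not> b i < a i"
    and "\<forall>i\<in>{1..n-1}. a i < b (i + 1)"
  shows "fsub (nc_mult (nc_mult (mon (word_down n a)) (mon v)) (mon (word_down n b)))
         (nc_mult (nc_mult (mon (word_down n a)) (mon (word_down n b))) (mon v)) \<in> I_plac"
proof -
  have "mon_cong plac_gens (word_down n a @ v @ word_down n b) (word_down n a @ word_down n b @ v)"
    using mon_cong_plac_word_down assms(2-5) by (simp add: strictly_decr_iff_sorted_wrt)
  then show ?thesis
    unfolding mon_cong_def I_plac_def by (simp add: nc_mult_mon)
qed

end
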